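(* Let $(\mathcal M,X,\bot)$ be a non trivial and accessible concurrent system. Then its characteristic root $r$ satisfies $r<\infty$.
   Context: A trace monoid $\mathcal M=\mathcal M(\Sigma,I)$ is $\langle\Sigma\mid ab=ba\ ((a,b)\in I)\rangle$ with $\Sigma$ finite and $I$ irreflexive symmetric; $|x|$ is trace length. A concurrent system $(\mathcal M,X,\bot)$: $X$ a finite set, $\bot\notin X$, a right action of $\mathcal M$ on $X\cup\{\bot\}$ with $\bot\cdot x=\bot$ for all $x$. Non trivial: there exist a state $\alpha$ and a letter $a$ with $\alpha\cdot a\neq\bot$. Accessible: for all $\alpha,\beta\in X$ there is $x$ with $\alpha\cdot x=\beta$. The characteristic root $r\in(0,+\infty]$ is the minimum over $\alpha,\beta\in X$ of the radius of convergence of $\sum_{n\ge0}\#\{x\in\mathcal M:|x|=n,\ \alpha\cdot x=\beta\}z^n$. *)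

theory Defs
  imports "HOL-Analysis.Analysis"
begin

(* Trace monoid M(S, I): words over S modulo the congruence generated by
   u @ [a,b] @ w ~ u @ [b,a] @ w for (a,b) in I. *)

definition indep_alphabet :: "'a set \<Rightarrow> ('a \<times> 'a) set \<Rightarrow> bool" where
  "indep_alphabet S I \<longleftrightarrow> finite S \<and> I \<subseteq> S \<times> S \<and> irrefl I \<and> sym I"

definition swap_step :: "('a \<times> 'a) set \<Rightarrow> 'a list \<Rightarrow> 'a list \<Rightarrow> bool" where
  "swap_step I v v' \<longleftrightarrow> (\<exists>u w a b. (a, b) \<in> I \<and> v = u @ [a, b] @ w \<and> v' = u @ [b, a] @ w)"

definition trace_rel :: "('a \<times> 'a) set \<Rightarrow> ('a list \<times> 'a list) set" where
  "trace_rel I = {(v, v'). (swap_step I)\<^sup>*\<^sup>* v v'}"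

definition traces_of_length :: "'a set \<Rightarrow> ('a \<times> 'a) set \<Rightarrow> nat \<Rightarrow> 'a list set set" where
  "traces_of_length S I n = {w. set w \<subseteq> S \<and> length w = n} // trace_rel I"

(* States: 'x option, with None playing the role of the sink state \<bottom>.
   The action of a letter on a state is given by delta; \<bottom> . a = \<bottom>. *)
definition step :: "('x \<Rightarrow> 'a \<Rightarrow> 'x option) \<Rightarrow> 'x option \<Rightarrow> 'a \<Rightarrow> 'x option" where
  "step \<delta> s a = (case s of None \<Rightarrow> None | Some x \<Rightarrow> \<delta> x a)"

definition act :: "('x \<Rightarrow> 'a \<Rightarrow> 'x option) \<Rightarrow> 'x option \<Rightarrow> 'a list \<Rightarrow> 'x option" where
  "act \<delta> s w = foldl (step \<delta>) s w"

(* (S,I,X,delta) is a concurrent system: delta induces a right action of the trace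
   monoid M(S,I) on X \<union> {\<bottom>}, i.e. states stay in X \<union> {\<bottom>} and independent letters commute. *)
definition concurrent_system ::
  "'a set \<Rightarrow> ('a \<times> 'a) set \<Rightarrow> 'x set \<Rightarrow> ('x \<Rightarrow> 'a \<Rightarrow> 'x option) \<Rightarrow> bool" where
  "concurrent_system S I X \<delta> \<longleftrightarrow>
     indep_alphabet S I \<and> finite X \<and>
     (\<forall>x\<in>X. \<forall>a\<in>S. \<delta> x a \<in> Some ` X \<union> {None}) \<and>
     (\<forall>x\<in>X. \<forall>(a, b)\<in>I. step \<delta> (step \<delta> (Some x) a) b = step \<delta> (step \<delta> (Some x) b) a)"

definition non_trivial :: "'a set \<Rightarrow> 'x set \<Rightarrow> ('x \<Rightarrow> 'a \<Rightarrow> 'x option) \<Rightarrow> bool" where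
  "non_trivial S X \<delta> \<longleftrightarrow> (\<exists>x\<in>X. \<exists>a\<in>S. \<delta> x a \<noteq> None)"

definition accessible :: "'a set \<Rightarrow> 'x set \<Rightarrow> ('x \<Rightarrow> 'a \<Rightarrow> 'x option) \<Rightarrow> bool" where
  "accessible S X \<delta> \<longleftrightarrow> (\<forall>x\<in>X. \<forall>y\<in>X. \<exists>w. set w \<subseteq> S \<and> act \<delta> (Some x) w = Some y)"

definition count_traces ::
  "'a set \<Rightarrow> ('a \<times> 'a) set \<Rightarrow> ('x \<Rightarrow> 'a \<Rightarrow> 'x option) \<Rightarrow> 'x \<Rightarrow> 'x \<Rightarrow> nat \<Rightarrow> nat" where
  "count_traces S I \<delta> x y n =
     card {t \<in> traces_of_length S I n. \<exists>w\<in>t. act \<delta> (Some x) w = Some y}"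

definition characteristic_root ::
  "'a set \<Rightarrow> ('a \<times> 'a) set \<Rightarrow> 'x set \<Rightarrow> ('x \<Rightarrow> 'a \<Rightarrow> 'x option) \<Rightarrow> ereal" where
  "characteristic_root S I X \<delta> =
     Min {conv_radius (\<lambda>n. real (count_traces S I \<delta> x y n)) | x y. x \<in> X \<and> y \<in> X}"

end

theory Submission
  imports Defs
begin

text \<open>Non-triviality gives a transition \<open>x \<cdot> a = y\<close> and accessibility a word \<open>w\<close> with
  \<open>y \<cdot> w = x\<close>, so \<open>u = a w\<close> is a non-empty loop at \<open>x\<close>. Every power \<open>u\<^sup>k\<close> is then a word of
  length \<open>k |u|\<close> leading from \<open>x\<close> to \<open>x\<close>, so infinitely many coefficients of the series
  counting traces from \<open>x\<close> to \<open>x\<close> are at least 1, and its radius of convergence is at most 1.\<close>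

lemma act_append: "act \<delta> s (u @ v) = act \<delta> (act \<delta> s u) v"
  by (simp add: act_def)

lemma act_concat_replicate:
  assumes "act \<delta> (Some x) u = Some x"
  shows "act \<delta> (Some x) (concat (replicate k u)) = Some x"
proof (induction k)
  case 0
  show ?case by (simp add: act_def)
next
  case (Suc k)
  then show ?case by (simp add: act_append assms)
qed

lemma finite_traces_of_length:
  assumes "finite S"
  shows "finite (traces_of_length S I n)"
  using finite_lists_length_eq[OF assms]
  unfolding traces_of_length_def quotient_def by auto

lemma count_traces_pos:
  assumes "finite S" and "set w \<subseteq> S" and "act \<delta> (Some x) w = Some y"
  shows "count_traces S I \<delta> x y (length w) > 0"
proof -
  let ?T = "{t \<in> traces_of_length S I (length w). \<exists>v\<in>t. act \<delta> (Some x) v = Some y}"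
  have "trace_rel I `` {w} \<in> traces_of_length S I (length w)"
    unfolding traces_of_length_def by (rule quotientI) (use assms(2) in auto)
  moreover have "w \<in> trace_rel I `` {w}"
    by (simp add: trace_rel_def)
  ultimately have "trace_rel I `` {w} \<in> ?T"
    using assms(3) by blast
  moreover have "finite ?T"
    using finite_traces_of_length[OF assms(1)] by simp
  ultimately show ?thesis
    unfolding count_traces_def by (auto simp: card_gt_0_iff)
qed

lemma conv_radius_le_1_if_frequently_norm_ge_1:
  fixes f :: "nat \<Rightarrow> 'a :: {banach, real_normed_div_algebra}"
  assumes "\<exists>\<^sub>F n in sequentially. norm (f n) \<ge> 1"
  shows "conv_radius f \<le> 1"
proof -
  have "\<not> summable (\<lambda>n. f n * 1 ^ n)"
  proof
    assume "summable (\<lambda>n. f n * 1 ^ n)"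
    then have "f \<longlonglongrightarrow> 0"
      using summable_LIMSEQ_zero by simp
    then have "\<forall>\<^sub>F n in sequentially. norm (f n) < 1"
      using order_tendstoD(2)[OF tendsto_norm_zero, of f sequentially 1] by simp
    with assms show False
      by (simp add: frequently_def eventually_mono not_le)
  qed
  then show ?thesis
    using conv_radius_leI'[of f 1] by (simp add: one_ereal_def)
qed

lemma conv_radius_count_traces_loop_le_1:
  assumes "finite S" and "u \<noteq> []" and "set u \<subseteq> S" and "act \<delta> (Some x) u = Some x"
  shows "conv_radius (\<lambda>n. real (count_traces S I \<delta> x x n)) \<le> 1"
proof (rule conv_radius_le_1_if_frequently_norm_ge_1)
  have "count_traces S I \<delta> x x (k * length u) > 0" for k
    using count_traces_pos[OF assms(1), of "concat (replicate k u)" \<delta> x x I]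
      act_concat_replicate[OF assms(4)] assms(3)
    by (simp add: length_concat sum_list_replicate set_replicate_conv_if)
  then show "\<exists>\<^sub>F n in sequentially. norm (real (count_traces S I \<delta> x x n)) \<ge> 1"
    unfolding frequently_sequentially
  proof (intro allI exI conjI)
    fix N
    show "N \<le> N * length u"
      using assms(2) by (simp add: Suc_le_eq)
    show "norm (real (count_traces S I \<delta> x x (N * length u))) \<ge> 1"
      using \<open>count_traces S I \<delta> x x (N * length u) > 0\<close> by simp
  qed
qed

lemma characteristic_root_le_conv_radius:
  assumes "finite X" and "x \<in> X" and "y \<in> X"
  shows "characteristic_root S I X \<delta> \<le> conv_radius (\<lambda>n. real (count_traces S I \<delta> x y n))"
proof -
  let ?M = "{conv_radius (\<lambda>n. real (count_traces S I \<delta> x y n)) | x y. x \<in> X \<and> y \<in> X}"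
  have "?M = (\<lambda>(x, y). conv_radius (\<lambda>n. real (count_traces S I \<delta> x y n))) ` (X \<times> X)"
    by auto
  then have "finite ?M"
    using assms(1) by simp
  moreover have "conv_radius (\<lambda>n. real (count_traces S I \<delta> x y n)) \<in> ?M"
    using assms(2,3) by blast
  ultimately show ?thesis
    unfolding characteristic_root_def by (rule Min_le)
qed

lemma concurrent_system_loop:
  assumes "concurrent_system S I X \<delta>" and "non_trivial S X \<delta>" and "accessible S X \<delta>"
  obtains x u where "x \<in> X" and "u \<noteq> []" and "set u \<subseteq> S" and "act \<delta> (Some x) u = Some x"
proof -
  from assms(2) obtain x a where x: "x \<in> X" and a: "a \<in> S" and "\<delta> x a \<noteq> None"
    unfolding non_trivial_def by blast
  moreover have "\<delta> x a \<in> Some ` X \<union> {None}"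
    using assms(1) x a unfolding concurrent_system_def by blast
  ultimately obtain y where y: "y \<in> X" and xy: "\<delta> x a = Some y"
    by auto
  from assms(3) y x obtain w where "set w \<subseteq> S" and "act \<delta> (Some y) w = Some x"
    unfolding accessible_def by blast
  with x a xy show thesis
    by (intro that[of x "a # w"]) (auto simp: act_def step_def)
qed

theorem proposition2:
  fixes S :: "'a set" and I :: "('a \<times> 'a) set" and X :: "'x set"
    and \<delta> :: "'x \<Rightarrow> 'a \<Rightarrow> 'x option"
  assumes "concurrent_system S I X \<delta>"
    and "non_trivial S X \<delta>"
    and "accessible S X \<delta>"
  shows "characteristic_root S I X \<delta> < \<infinity>"
proof -
  have "finite S" and "finite X"
    using assms(1) unfolding concurrent_system_def indep_alphabet_def by simp_all
  obtain x u where x: "x \<in> X" and loop: "u \<noteq> []" "set u \<subseteq> S" "act \<delta> (Some x) u = Some x"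
    using concurrent_system_loop[OF assms] .
  have "characteristic_root S I X \<delta> \<le> conv_radius (\<lambda>n. real (count_traces S I \<delta> x x n))"
    using characteristic_root_le_conv_radius[OF \<open>finite X\<close> x x] .
  also have "\<dots> \<le> 1"
    using conv_radius_count_traces_loop_le_1[OF \<open>finite S\<close> loop] .
  also have "\<dots> < \<infinity>"
    by simp
  finally show ?thesis .
qed

end
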